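(* Let $1\le p<\infty$ and $f\in H^p(\mathbb B)$. Then for every $q\in\mathbb B$, $$|f(q)|\le\sqrt2\Big(\frac1{1-|q|^2}\Big)^{1/p}\|f\|_p.$$
   Context: $\mathbb H$ quaternions, $\mathbb S=\{q:q^2=-1\}$, $\mathbb B$ open unit ball. Slice regular functions on $\mathbb B$: functions whose restriction to each $\mathbb B\cap(\mathbb R+I\mathbb R)$, $I\in\mathbb S$, is $C^1$ and annihilated by $\frac12(\partial_x+I\partial_y)$ (equivalently, convergent power series $\sum q^na_n$). $\|f\|_p=\sup_{I\in\mathbb S}\lim_{r\to1^-}(\frac1{2\pi}\int_{-\pi}^\pi|f(re^{I\theta})|^pd\theta)^{1/p}$ and $H^p(\mathbb B)=\{f$ regular on $\mathbb B:\|f\|_p<\infty\}$. *)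

theory Defs
  imports "HOL-Analysis.Analysis"
begin

text \<open>Quaternions, realised via the Cayley--Dickson construction as pairs of complex
numbers: (a, b) stands for a + b j with a, b complex and j z = cnj z j.
The norm inherited from the product type is sqrt (norm a ^ 2 + norm b ^ 2), i.e. the
Euclidean norm of R^4, which is the quaternionic modulus.\<close>

type_synonym quat = "complex \<times> complex"

definition qmul :: "quat \<Rightarrow> quat \<Rightarrow> quat" (infixl "\<otimes>\<^sub>q" 70) where
  "p \<otimes>\<^sub>q q = (fst p * fst q - snd p * cnj (snd q), fst p * snd q + snd p * cnj (fst q))"

definition qone :: quat where "qone = (1, 0)"

definition imag_units :: "quat set" where
  "imag_units = {I. I \<otimes>\<^sub>q I = - qone}"

definition qball :: "quat set" where
  "qball = {q. norm q < 1}"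

text \<open>Slice regularity on B: for every I in S the restriction
g(x,y) = f(x + y I) to B \<inter> (R + I R) (i.e. (x,y) in the unit disc) is C^1, with
partial derivatives gx = d/dx g, gy = d/dy g, and annihilated by
(1/2)(d/dx + I d/dy), i.e. gx + I gy = 0.\<close>
definition slice_regular :: "(quat \<Rightarrow> quat) \<Rightarrow> bool" where
  "slice_regular f \<longleftrightarrow>
     (\<forall>I\<in>imag_units.
        (\<exists>gx gy :: real \<times> real \<Rightarrow> quat.
           continuous_on (ball 0 1) gx \<and> continuous_on (ball 0 1) gy \<and>
           (\<forall>z\<in>ball 0 1.
              ((\<lambda>w. f (fst w *\<^sub>R qone + snd w *\<^sub>R I))
                 has_derivative (\<lambda>h. fst h *\<^sub>R gx z + snd h *\<^sub>R gy z)) (at z) \<and>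
              (1/2) *\<^sub>R (gx z + I \<otimes>\<^sub>q gy z) = 0)))"

definition slice_exp :: "real \<Rightarrow> quat \<Rightarrow> real \<Rightarrow> quat" where
  "slice_exp r I \<theta> = (r * cos \<theta>) *\<^sub>R qone + (r * sin \<theta>) *\<^sub>R I"

definition integral_mean :: "(quat \<Rightarrow> quat) \<Rightarrow> real \<Rightarrow> quat \<Rightarrow> real \<Rightarrow> real" where
  "integral_mean f p I r =
     (1 / (2 * pi) * integral {-pi..pi} (\<lambda>\<theta>. norm (f (slice_exp r I \<theta>)) powr p)) powr (1 / p)"

definition Hp_norm :: "real \<Rightarrow> (quat \<Rightarrow> quat) \<Rightarrow> ereal" where
  "Hp_norm p f = (SUP I\<in>imag_units. Lim (at_left 1) (\<lambda>r. ereal (integral_mean f p I r)))"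

definition Hp :: "real \<Rightarrow> (quat \<Rightarrow> quat) set" where
  "Hp p = {f. slice_regular f \<and> Hp_norm p f < \<infinity>}"

end

theory Submission
  imports Defs "HOL-Complex_Analysis.Complex_Analysis"
begin

(* Every quaternion q lies on a slice C_I = R + I R, and z = x + i y \<mapsto> x + y I
   maps the complex unit disc isometrically onto B \<inter> C_I.  The real-linear functionals
   u \<mapsto> <u,e> - i <I u,e> turn the Cauchy--Riemann equation gx + I gy = 0 into ordinary
   holomorphy, so restrictions of slice regular functions inherit Gauss' mean value property
   and, by Jensen's inequality, the sub-mean-value property of |.|^p for p \<ge> 1.
   Applied to h(\<zeta>) f(R \<Psi>(\<zeta>)), where \<Psi> is a disc automorphism moving 0 to z/R and the
   weight h = ((1-\<rho>^2)^(1/2)/(1+\<rho>\<zeta>))^(2/p), \<rho> = |z|/R, absorbs the Poisson kernel arising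
   from the boundary change of variables, this gives (1 - (|z|/R)^2) |f(z)|^p \<le> M_p(f,I,R)^p.
   With h = 1 the same inequality shows that M_p(f,I,r) increases in r, so the limit in the
   definition of ||f||_p exists and dominates every M_p(f,I,r); letting R \<rightarrow> 1 gives
   |f(q)| \<le> (1-|q|^2)^(-1/p) ||f||_p, which is stronger than the claim. *)

section \<open>Quaternion algebra\<close>

lemma qmul_add_right: "p \<otimes>\<^sub>q (u + v) = p \<otimes>\<^sub>q u + p \<otimes>\<^sub>q v"
  by (simp add: qmul_def algebra_simps)

lemma qmul_scaleR_right: "p \<otimes>\<^sub>q (c *\<^sub>R u) = c *\<^sub>R (p \<otimes>\<^sub>q u)"
  by (simp add: qmul_def algebra_simps scaleR_conv_of_real)

lemma qmul_add_left: "(p + q) \<otimes>\<^sub>q u = p \<otimes>\<^sub>q u + q \<otimes>\<^sub>q u"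
  by (simp add: qmul_def algebra_simps)

lemma qmul_scaleR_left: "(c *\<^sub>R p) \<otimes>\<^sub>q u = c *\<^sub>R (p \<otimes>\<^sub>q u)"
  by (simp add: qmul_def algebra_simps scaleR_conv_of_real)

lemma qmul_one_left: "qone \<otimes>\<^sub>q u = u"
  by (simp add: qmul_def qone_def)

lemma continuous_on_qmul [continuous_intros]:
  assumes "continuous_on S a" "continuous_on S b"
  shows "continuous_on S (\<lambda>z. a z \<otimes>\<^sub>q b z)"
  unfolding qmul_def using assms by (intro continuous_intros)

text \<open>The quaternionic modulus is multiplicative (Euler's four-square identity).\<close>
lemma norm_qmul: "norm (p \<otimes>\<^sub>q q) = norm p * norm q"
proof -
  obtain a b where p: "p = (a,b)" by fastforce
  obtain c d where q: "q = (c,d)" by fastforce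
  have four_squares: "(cmod (a*c - b*cnj d))^2 + (cmod (a*d + b*cnj c))^2
      = ((cmod a)^2 + (cmod b)^2) * ((cmod c)^2 + (cmod d)^2)"
    unfolding cmod_power2 by (simp add: algebra_simps power2_eq_square)
  show ?thesis
    unfolding p q qmul_def fst_conv snd_conv norm_Pair four_squares real_sqrt_mult ..
qed

lemma imag_unit_coords:
  assumes "I \<in> imag_units"
  shows "Re (fst I) = 0" "(cmod (fst I))^2 + (cmod (snd I))^2 = 1"
proof -
  obtain a b where I: "I = (a,b)" by fastforce
  have e1: "a*a - b * cnj b = -1" and e2: "a*b + b * cnj a = 0"
    using assms by (auto simp: imag_units_def qmul_def qone_def I)
  have "Re a = 0"
  proof (rule ccontr)
    assume h: "Re a \<noteq> 0"
    have "b * (a + cnj a) = 0" using e2 by (simp add: algebra_simps)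
    moreover have "a + cnj a \<noteq> 0" using h by (simp add: complex_eq_iff)
    ultimately have "b = 0" by simp
    then have "a*a = -1" using e1 by simp
    then have "Re a * Im a = 0" "Re a ^2 - Im a^2 = -1"
      by (auto simp: complex_eq_iff power2_eq_square)
    then show False using h
      by (auto simp: power2_eq_square) (smt (verit) mult_nonneg_nonneg zero_le_square)
  qed
  moreover have "b * cnj b = of_real ((cmod b)^2)" using complex_norm_square[of b] by simp
  ultimately show "Re (fst I) = 0" "(cmod (fst I))^2 + (cmod (snd I))^2 = 1"
    using e1 by (auto simp: I complex_eq_iff cmod_def power2_eq_square)
qed

lemma imag_unit_mk:
  assumes "s^2 + (cmod d)^2 = 1"
  shows "(Complex 0 s, d) \<in> imag_units"
proof -
  have "d * cnj d = of_real ((cmod d)^2)" using complex_norm_square[of d] by simp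
  then have "Complex 0 s * Complex 0 s - d * cnj d = -1"
    using assms by (simp add: complex_eq_iff power2_eq_square)
  moreover have "Complex 0 s * d + d * cnj (Complex 0 s) = 0"
    by (simp add: complex_eq_iff algebra_simps)
  ultimately show ?thesis by (simp add: imag_units_def qmul_def qone_def)
qed

text \<open>Associativity in the special case needed: I (I u) = I^2 u = -u.\<close>
lemma imag_unit_mult_twice:
  assumes "I \<in> imag_units" shows "I \<otimes>\<^sub>q (I \<otimes>\<^sub>q u) = - u"
proof -
  obtain a b where I: "I = (a,b)" by fastforce
  obtain c d where u: "u = (c,d)" by fastforce
  have e1: "a*a - b * cnj b = -1" and e2: "a*b + b * cnj a = 0"
    using assms by (auto simp: imag_units_def qmul_def qone_def I)
  have "a * (a * c - b * cnj d) - b * cnj (a * d + b * cnj c)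
      = (a*a - b*cnj b) * c - (a*b + b*cnj a) * cnj d"
    by (simp add: algebra_simps)
  moreover have "a * (a * d + b * cnj c) + b * cnj (a * c - b * cnj d)
      = (a*a - b*cnj b) * d + (a*b + b*cnj a) * cnj c"
    by (simp add: algebra_simps)
  ultimately show ?thesis using e1 e2 by (simp add: qmul_def I u)
qed

section \<open>Slices\<close>

definition qemb :: "quat \<Rightarrow> complex \<Rightarrow> quat" where
  "qemb I z = Re z *\<^sub>R qone + Im z *\<^sub>R I"

lemma qemb_i: "qemb I \<i> = I"
  by (simp add: qemb_def)

lemma slice_exp_qemb: "slice_exp r I \<theta> = qemb I (of_real r * cis \<theta>)"
  by (simp add: slice_exp_def qemb_def)

lemma qmul_qemb: "qemb I c \<otimes>\<^sub>q u = Re c *\<^sub>R u + Im c *\<^sub>R (I \<otimes>\<^sub>q u)"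
  by (simp add: qemb_def qmul_add_left qmul_scaleR_left qmul_one_left)

lemma continuous_on_qemb [continuous_intros]:
  assumes "continuous_on S h"
  shows "continuous_on S (\<lambda>z. qemb I (h z))"
  unfolding qemb_def using assms by (intro continuous_intros)

lemma norm_qemb:
  assumes "I \<in> imag_units" shows "norm (qemb I z) = cmod z"
proof -
  obtain a b where I: "I = (a,b)" by fastforce
  have r: "Re a = 0" and n: "(cmod a)^2 + (cmod b)^2 = 1"
    using imag_unit_coords[OF assms] by (auto simp: I)
  have q: "qemb I z = (of_real (Re z) + of_real (Im z) * a, of_real (Im z) * b)"
    by (simp add: qemb_def qone_def I scaleR_conv_of_real)
  have "(norm (qemb I z))^2 = (Re z + Im z * Re a)^2 + (Im z * Im a)^2 + (Im z)^2 * (cmod b)^2"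
    unfolding q norm_Pair real_sqrt_pow2[OF add_nonneg_nonneg[OF zero_le_power2 zero_le_power2]]
      cmod_power2
    by (simp add: power_mult_distrib cmod_power2 distrib_left)
  also have "\<dots> = (Re z)^2 + (Im z)^2 * ((cmod a)^2 + (cmod b)^2)"
    using r unfolding cmod_power2 by (simp add: power2_eq_square algebra_simps)
  finally have "(norm (qemb I z))^2 = (cmod z)^2" using n by (simp add: cmod_power2)
  then show ?thesis by (simp add: power2_eq_iff_nonneg)
qed

text \<open>Every quaternion a + b j lies on some slice: take I in the direction of its
  imaginary part (Im a) i + b j, or I = i when that part vanishes.\<close>
lemma quat_slice:
  fixes q :: quat
  obtains I z where "I \<in> imag_units" "q = qemb I z"
proof -
  obtain a b where q: "q = (a, b)" by fastforce
  define n where "n = sqrt ((Im a)^2 + (cmod b)^2)"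
  show ?thesis
  proof (cases "n = 0")
    case True
    then have "Im a = 0" "b = 0" unfolding n_def by (auto simp: add_nonneg_eq_0_iff)
    then have "q = qemb (Complex 0 1, 0) (of_real (Re a))"
      by (simp add: q qemb_def qone_def complex_eq_iff)
    moreover have "(Complex 0 1, 0) \<in> imag_units" by (rule imag_unit_mk) simp
    ultimately show ?thesis using that by blast
  next
    case False
    moreover have "n \<ge> 0" unfolding n_def by simp
    ultimately have n0: "n > 0" by linarith
    have nn: "n^2 = (Im a)^2 + (cmod b)^2" unfolding n_def by simp
    have "(Im a / n)^2 + (cmod (b / of_real n))^2 = ((Im a)^2 + (cmod b)^2) / n^2"
      using n0 by (simp add: norm_divide power_divide add_divide_distrib)
    also have "\<dots> = 1" unfolding nn[symmetric] using n0 by simp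
    finally have I: "(Complex 0 (Im a / n), b / of_real n) \<in> imag_units" by (rule imag_unit_mk)
    have "q = qemb (Complex 0 (Im a / n), b / of_real n) (Complex (Re a) n)"
      using n0 by (simp add: q qemb_def qone_def complex_eq_iff scaleR_conv_of_real)
    then show ?thesis using that I by blast
  qed
qed

section \<open>Complex coordinates on a slice\<close>

text \<open>For fixed I and e, the real-linear map u \<mapsto> <u,e> - i <I u,e> is complex-linear with
  respect to left multiplication by elements of C_I.  Since these maps (for all e) separate
  quaternions, they reduce slice regularity to ordinary holomorphy.\<close>
definition qlam :: "quat \<Rightarrow> quat \<Rightarrow> quat \<Rightarrow> complex" where
  "qlam I e u = Complex (inner u e) (- inner (I \<otimes>\<^sub>q u) e)"

lemma Re_qlam: "Re (qlam I e u) = inner u e"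
  by (simp add: qlam_def)

lemma qlam_mult:
  assumes "I \<in> imag_units" shows "qlam I e (qemb I c \<otimes>\<^sub>q u) = c * qlam I e u"
  using imag_unit_mult_twice[OF assms, of u]
  by (simp add: qlam_def qmul_qemb qmul_add_right qmul_scaleR_right inner_add_left complex_eq_iff
      inner_minus_left inner_diff_left)

lemma bounded_linear_qlam: "bounded_linear (qlam I e)"
  unfolding qlam_def[abs_def]
  by (rule bounded_linearI')
     (simp_all add: qmul_add_right qmul_scaleR_right inner_add_left complex_eq_iff)

definition slice_holomorphic :: "quat \<Rightarrow> (complex \<Rightarrow> quat) \<Rightarrow> complex set \<Rightarrow> bool" where
  "slice_holomorphic I G S \<longleftrightarrow> (\<forall>e. (\<lambda>z. qlam I e (G z)) holomorphic_on S)"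

lemma slice_holomorphic_compose:
  assumes "slice_holomorphic I G T" "\<phi> holomorphic_on S" "\<phi> ` S \<subseteq> T"
  shows "slice_holomorphic I (\<lambda>z. G (\<phi> z)) S"
  unfolding slice_holomorphic_def
proof
  fix e
  have "(\<lambda>z. qlam I e (G z)) \<circ> \<phi> holomorphic_on S"
    by (rule holomorphic_on_compose_gen[OF assms(2) _ assms(3)])
       (use assms(1) in \<open>unfold slice_holomorphic_def, blast\<close>)
  then show "(\<lambda>z. qlam I e (G (\<phi> z))) holomorphic_on S" by (simp add: o_def)
qed

lemma slice_holomorphic_mult:
  assumes "I \<in> imag_units" "h holomorphic_on S" "slice_holomorphic I G S"
  shows "slice_holomorphic I (\<lambda>z. qemb I (h z) \<otimes>\<^sub>q G z) S"
  using assms(2,3) by (auto simp: slice_holomorphic_def qlam_mult[OF assms(1)]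
      intro: holomorphic_on_mult)

text \<open>The restriction of a slice regular function to a slice is continuous and slice
  holomorphic: the Cauchy--Riemann system gx + I gy = 0 becomes, in each complex coordinate,
  the equation (d/dy) = i (d/dx), i.e. complex differentiability.\<close>
lemma slice_regular_restriction:
  assumes "slice_regular f" "I \<in> imag_units"
  shows "slice_holomorphic I (\<lambda>z. f (qemb I z)) (ball 0 1)"
    and "continuous_on (ball 0 1) (\<lambda>z. f (qemb I z))"
proof -
  obtain gx gy :: "real \<times> real \<Rightarrow> quat" where
    H0: "\<forall>z\<in>ball 0 1. ((\<lambda>w. f (fst w *\<^sub>R qone + snd w *\<^sub>R I))
          has_derivative (\<lambda>h. fst h *\<^sub>R gx z + snd h *\<^sub>R gy z)) (at z) \<and>
          (1/2) *\<^sub>R (gx z + I \<otimes>\<^sub>q gy z) = 0"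
    using assms unfolding slice_regular_def by blast
  have D: "((\<lambda>z. f (qemb I z)) has_derivative
             (\<lambda>h. Re h *\<^sub>R gx (Re w, Im w) + Im h *\<^sub>R gy (Re w, Im w))) (at w)"
    and CR: "gx (Re w, Im w) = - (I \<otimes>\<^sub>q gy (Re w, Im w))"
    if w: "w \<in> ball 0 1" for w
  proof -
    have zb: "(Re w, Im w) \<in> ball 0 1" using w by (simp add: norm_Pair cmod_def)
    have blRI: "bounded_linear (\<lambda>h::complex. (Re h, Im h))"
      by (intro bounded_linear_Pair bounded_linear_Re bounded_linear_Im)
    have "((\<lambda>w. f (fst w *\<^sub>R qone + snd w *\<^sub>R I)) \<circ> (\<lambda>h::complex. (Re h, Im h)) has_derivative
        (\<lambda>h. fst h *\<^sub>R gx (Re w, Im w) + snd h *\<^sub>R gy (Re w, Im w)) \<circ> (\<lambda>h. (Re h, Im h))) (at w)"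
      by (rule diff_chain_at[OF bounded_linear_imp_has_derivative[OF blRI]])
         (use bspec[OF H0 zb] in simp)
    then show "((\<lambda>z. f (qemb I z)) has_derivative
             (\<lambda>h. Re h *\<^sub>R gx (Re w, Im w) + Im h *\<^sub>R gy (Re w, Im w))) (at w)"
      by (simp add: o_def qemb_def)
    show "gx (Re w, Im w) = - (I \<otimes>\<^sub>q gy (Re w, Im w))"
      using bspec[OF H0 zb] by (simp add: eq_neg_iff_add_eq_0)
  qed
  show "continuous_on (ball 0 1) (\<lambda>z. f (qemb I z))"
    using D by (intro continuous_at_imp_continuous_on ballI has_derivative_continuous) blast
  show "slice_holomorphic I (\<lambda>z. f (qemb I z)) (ball 0 1)"
    unfolding slice_holomorphic_def holomorphic_on_def
  proof (intro allI ballI)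
    fix e and w :: complex assume w: "w \<in> ball 0 1"
    let ?X = "qlam I e (gx (Re w, Im w))" and ?Y = "qlam I e (gy (Re w, Im w))"
    have lin: "linear (qlam I e)" by (rule bounded_linear.linear[OF bounded_linear_qlam])
    have Y: "?Y = \<i> * ?X"
      using CR[OF w] qlam_mult[OF assms(2), of e \<i> "gy (Re w, Im w)"]
      by (simp add: qemb_i linear_neg[OF lin])
    have "(qlam I e \<circ> (\<lambda>z. f (qemb I z)) has_derivative
            qlam I e \<circ> (\<lambda>h. Re h *\<^sub>R gx (Re w, Im w) + Im h *\<^sub>R gy (Re w, Im w))) (at w)"
      by (rule diff_chain_at[OF D[OF w] bounded_linear_imp_has_derivative[OF bounded_linear_qlam]])
    moreover have "qlam I e \<circ> (\<lambda>h. Re h *\<^sub>R gx (Re w, Im w) + Im h *\<^sub>R gy (Re w, Im w))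
                   = (\<lambda>h. ?X * h)"
      using Y by (auto simp: linear_add[OF lin] linear_scale[OF lin] scaleR_conv_of_real
          complex_eq_iff algebra_simps)
    ultimately have "((\<lambda>z. qlam I e (f (qemb I z))) has_field_derivative ?X) (at w)"
      by (simp add: has_field_derivative_def o_def)
    then show "(\<lambda>z. qlam I e (f (qemb I z))) field_differentiable at w within ball 0 1"
      using field_differentiable_at_within field_differentiable_def by blast
  qed
qed

section \<open>Mean values on the unit circle\<close>

lemma cis_periodic: "cis (x + 2*pi*real_of_int k) = cis x"
proof -
  have "cis (2*pi*real_of_int k) = 1"
    using cos_int_2pin[of k] sin_int_2pin[of k] by (simp add: cis.code complex_eq_iff)
  then show ?thesis by (simp add: cis_mult[symmetric])
qed

lemma periodic_integral_shift_aux: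
  fixes g :: "real \<Rightarrow> 'a::euclidean_space"
  assumes cont: "continuous_on UNIV g" and per: "\<And>x. g (x + 2*pi) = g x"
    and c: "0 \<le> c" "c \<le> 2*pi"
  shows "integral {-pi..pi} (\<lambda>x. g (x + c)) = integral {-pi..pi} g"
proof -
  have intg: "g integrable_on {a..b}" for a b
    using cont by (intro integrable_continuous_interval) (auto intro: continuous_on_subset)
  have "integral {-pi..pi} (\<lambda>x. g (x + c)) = integral {-pi+c..pi+c} g"
    using integral_shift_Icc_real[of "-pi" pi g c] by (simp add: o_def add.commute)
  also have "\<dots> = integral {-pi+c..pi} g + integral {pi..pi+c} g"
    using Henstock_Kurzweil_Integration.integral_combine[where a="-pi+c" and c=pi and b="pi+c" and f=g] c intg by simp
  also have "integral {pi..pi+c} g = integral {-pi..-pi+c} g"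
  proof -
    have "integral {-pi..-pi+c} g = integral {-pi..-pi+c} (\<lambda>x. g (x + 2*pi))" by (simp add: per)
    also have "\<dots> = integral {pi..pi+c} g"
      using integral_shift_Icc_real[of "-pi" "-pi+c" g "2*pi"] by (simp add: o_def add.commute)
    finally show ?thesis ..
  qed
  also have "integral {-pi+c..pi} g + integral {-pi..-pi+c} g = integral {-pi..pi} g"
    using Henstock_Kurzweil_Integration.integral_combine[where a="-pi" and c="-pi+c" and b=pi and f=g] c intg
    by (simp add: add.commute)
  finally show ?thesis .
qed

lemma periodic_integral_shift:
  fixes g :: "real \<Rightarrow> 'a::euclidean_space"
  assumes cont: "continuous_on UNIV g" and per: "\<And>x (k::int). g (x + 2*pi*k) = g x"
  shows "integral {-pi..pi} (\<lambda>x. g (x + c)) = integral {-pi..pi} g"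
proof -
  define k where "k = floor (c / (2*pi))"
  define c' where "c' = c - 2*pi*k"
  have "k \<le> c/(2*pi)" "c/(2*pi) < k + 1" unfolding k_def by linarith+
  then have c': "0 \<le> c'" "c' \<le> 2*pi" unfolding c'_def by (auto simp: field_simps)
  have "g (x + c) = g (x + c')" for x
    using per[of "x + c'" k] by (simp add: c'_def)
  then have "integral {-pi..pi} (\<lambda>x. g (x + c)) = integral {-pi..pi} (\<lambda>x. g (x + c'))" by simp
  also have "\<dots> = integral {-pi..pi} g"
    by (rule periodic_integral_shift_aux[OF cont _ c']) (use per[of _ 1] in simp)
  finally show ?thesis .
qed

text \<open>Averaging translates of a periodic function by a continuous phase: by Fubini and
  translation invariance, \<integral>\<integral> K(a + \<phi>(t)) dt da = 2\<pi> \<integral> K.\<close>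
lemma periodic_integral_average:
  fixes K \<phi> :: "real \<Rightarrow> real"
  assumes cK: "continuous_on UNIV K" and per: "\<And>x (k::int). K (x + 2*pi*k) = K x"
    and c\<phi>: "continuous_on UNIV \<phi>"
  shows "((\<lambda>a. integral {-pi..pi} (\<lambda>t. K (a + \<phi> t))) has_integral
           2*pi * integral {-pi..pi} K) {-pi..pi}"
proof -
  have cH: "continuous_on UNIV (\<lambda>(a, t). K (a + \<phi> t))"
  proof -
    have "continuous_on UNIV (\<lambda>x::real\<times>real. fst x + \<phi> (snd x))"
      by (intro continuous_intros continuous_on_compose2[OF c\<phi>]) auto
    then have "continuous_on UNIV (\<lambda>x::real\<times>real. K (fst x + \<phi> (snd x)))"
      by (rule continuous_on_compose2[OF cK]) auto
    then show ?thesis by (simp add: case_prod_beta)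
  qed
  have cont: "continuous_on {-pi..pi} (\<lambda>a. integral {-pi..pi} (\<lambda>t. K (a + \<phi> t)))"
    using integral_continuous_on_param[of "{-pi..pi}" "-pi" pi "\<lambda>a t. K (a + \<phi> t)"] cH
    by (simp add: cbox_interval continuous_on_subset)
  have "integral {-pi..pi} (\<lambda>a. integral {-pi..pi} (\<lambda>t. K (a + \<phi> t)))
      = integral {-pi..pi} (\<lambda>t. integral {-pi..pi} (\<lambda>a. K (a + \<phi> t)))"
    using integral_swap_continuous[of "-pi" "-pi" pi pi "\<lambda>a t. K (a + \<phi> t)"] cH
    by (simp add: cbox_interval continuous_on_subset)
  also have "\<dots> = integral {-pi..pi} (\<lambda>t. integral {-pi..pi} K)"
    using periodic_integral_shift[OF cK per] by simp
  also have "\<dots> = 2*pi * integral {-pi..pi} K" by simp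
  finally show ?thesis
    using integrable_continuous_interval[OF cont] by (metis has_integral_integral)
qed

text \<open>Gauss' mean value property for functions holomorphic in the disc and continuous up to
  the boundary, from Cauchy's integral formula.\<close>
lemma holomorphic_mean_value:
  fixes F :: "complex \<Rightarrow> complex"
  assumes contf: "continuous_on (cball 0 1) F" and holf: "F holomorphic_on ball 0 1"
  shows "((\<lambda>t. F (cis t)) has_integral (2*pi * F 0)) {-pi..pi}"
proof -
  have "((\<lambda>z. F z / (z - 0)) has_contour_integral (2 * of_real pi * \<i> * F 0)) (circlepath 0 1)"
    by (rule Cauchy_integral_circlepath[OF contf holf]) simp
  then have "((\<lambda>t. F (0 + 1 * cis t) / (0 + 1 * cis t - 0) * 1 * \<i> * cis t)
               has_integral (2 * of_real pi * \<i> * F 0)) {0..2*pi}"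
    unfolding circlepath_def by (subst (asm) has_contour_integral_part_circlepath_iff) auto
  then have "((\<lambda>t. \<i> * F (cis t)) has_integral (\<i> * (2 * pi * F 0))) {0..2*pi}"
    by (simp add: field_simps)
  then have "((\<lambda>t. (-\<i>) * (\<i> * F (cis t))) has_integral (-\<i>) * (\<i> * (2 * pi * F 0))) {0..2*pi}"
    by (rule has_integral_mult_right)
  then have I1: "((\<lambda>t. F (cis t)) has_integral (2 * pi * F 0)) {0..2*pi}"
    by (simp add: algebra_simps)
  have contF: "continuous_on UNIV (\<lambda>t. F (cis t))"
    by (rule continuous_on_compose2[OF contf]) (auto intro: continuous_intros)
  have "((\<lambda>t. F (cis (t + pi))) has_integral (2 * pi * F 0)) {0-pi..2*pi-pi}"
    using I1 has_integral_shift_real_ivl_iff[of "\<lambda>t. F (cis t)" _ 0 "2*pi" pi] by simp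
  then have "integral {-pi..pi} (\<lambda>t. F (cis (t + pi))) = 2 * pi * F 0"
    by (simp add: integral_unique)
  moreover have "integral {-pi..pi} (\<lambda>t. F (cis (t + pi))) = integral {-pi..pi} (\<lambda>t. F (cis t))"
    by (rule periodic_integral_shift[OF contF]) (simp add: cis_periodic)
  moreover have "(\<lambda>t. F (cis t)) integrable_on {-pi..pi}"
    using contF by (intro integrable_continuous_interval) (auto intro: continuous_on_subset)
  ultimately show ?thesis by (metis has_integral_integral)
qed

text \<open>The mean value property transfers to slice holomorphic functions coordinatewise; it
  yields the sub-mean-value inequality for the modulus.\<close>
lemma slice_holomorphic_mean_value:
  fixes G :: "complex \<Rightarrow> quat"
  assumes I: "I \<in> imag_units" and contG: "continuous_on (cball 0 1) G"
    and holG: "slice_holomorphic I G (ball 0 1)"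
  shows "norm (G 0) \<le> (1/(2*pi)) * integral {-pi..pi} (\<lambda>t. norm (G (cis t)))"
proof -
  have contc: "continuous_on UNIV (\<lambda>t. G (cis t))"
    by (rule continuous_on_compose2[OF contG]) (auto intro: continuous_intros)
  have intG: "(\<lambda>t. G (cis t)) integrable_on {-pi..pi}"
    using contc by (intro integrable_continuous_interval) (auto intro: continuous_on_subset)
  define m where "m = integral {-pi..pi} (\<lambda>t. G (cis t))"
  have "inner (m - (2*pi) *\<^sub>R G 0) e = 0" for e
  proof -
    have cF: "continuous_on (cball 0 1) (\<lambda>z. qlam I e (G z))"
      by (rule bounded_linear.continuous_on[OF bounded_linear_qlam contG])
    have hF: "(\<lambda>z. qlam I e (G z)) holomorphic_on ball 0 1"
      using holG unfolding slice_holomorphic_def by blast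
    have "qlam I e m = integral {-pi..pi} (qlam I e \<circ> (\<lambda>t. G (cis t)))"
      unfolding m_def by (rule integral_linear[OF intG bounded_linear_qlam, symmetric])
    also have "\<dots> = 2*pi * qlam I e (G 0)"
      using holomorphic_mean_value[OF cF hF] by (simp add: o_def integral_unique)
    finally have "Re (qlam I e m) = Re (2*pi * qlam I e (G 0))" by simp
    then show ?thesis by (simp add: Re_qlam inner_diff_left)
  qed
  then have m: "m = (2*pi) *\<^sub>R G 0"
    by (metis inner_eq_zero_iff right_minus_eq)
  have "norm m \<le> integral {-pi..pi} (\<lambda>t. norm (G (cis t)))"
    unfolding m_def
    by (rule integral_norm_bound_integral[OF intG])
       (use contc in \<open>auto intro!: integrable_continuous_interval continuous_intros
                           intro: continuous_on_subset\<close>)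
  then show ?thesis using m pi_gt_zero by (simp add: field_simps)
qed

lemma powr_above_tangent:
  fixes p m x :: real
  assumes p: "p \<ge> 1" and m: "m > 0" and x: "x \<ge> 0"
  shows "x powr p \<ge> m powr p + p * m powr (p - 1) * (x - m)"
proof (cases "x = 0")
  case True
  have "m powr (p - 1) * m = m powr p" using m by (simp add: powr_diff)
  moreover have "0 \<le> (p - 1) * m powr p" using p by simp
  ultimately show ?thesis using True p by (simp add: algebra_simps)
next
  case False
  then have "x > 0" using x by simp
  have "x powr p - m powr p \<ge> p * m powr (p - 1) * (x - m)"
    by (rule convex_on_imp_above_tangent[OF powr_convex[OF p]])
       (use m \<open>x > 0\<close> in \<open>auto simp: interior_open
          intro!: has_field_derivative_at_within has_real_derivative_powr\<close>)
  then show ?thesis by simp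
qed

text \<open>Jensen's inequality for the power p \<ge> 1 and the normalised measure on [-\<pi>, \<pi>]: if
  0 \<le> N is at most the mean of n \<ge> 0, then N^p is at most the mean of n^p.  Proof:
  integrate the tangent inequality at the mean.\<close>
lemma jensen_powr:
  fixes n :: "real \<Rightarrow> real"
  assumes p: "p \<ge> 1" and cont: "continuous_on {-pi..pi} n" and pos: "\<And>t. n t \<ge> 0"
    and N: "0 \<le> N" "N \<le> (1/(2*pi)) * integral {-pi..pi} n"
  shows "N powr p \<le> (1/(2*pi)) * integral {-pi..pi} (\<lambda>t. n t powr p)"
proof -
  have intn: "n integrable_on {-pi..pi}" using cont by (rule integrable_continuous_interval)
  have intp: "(\<lambda>t. n t powr p) integrable_on {-pi..pi}"
    using p pos by (intro integrable_continuous_interval continuous_on_powr' cont continuous_intros) auto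
  have int_p_nonneg: "0 \<le> integral {-pi..pi} (\<lambda>t. n t powr p)"
    by (rule integral_nonneg[OF intp]) simp
  define m where "m = (1/(2*pi)) * integral {-pi..pi} n"
  show ?thesis
  proof (cases "m = 0")
    case True
    then show ?thesis using N m_def p int_p_nonneg by simp
  next
    case False
    have "0 \<le> integral {-pi..pi} n" by (rule integral_nonneg[OF intn]) (use pos in simp)
    then have "m > 0" using False by (simp add: m_def)
    let ?A = "m powr p" and ?B = "p * m powr (p - 1)"
    have tangent: "((\<lambda>t. ?A + ?B * (n t - m)) has_integral 2*pi*?A) {-pi..pi}"
    proof -
      have "((\<lambda>t. (?A - ?B * m) + ?B * n t) has_integral
              ((2*pi) * (?A - ?B * m) + ?B * integral {-pi..pi} n)) {-pi..pi}"
        using has_integral_const_real[of "?A - ?B*m" "-pi" pi]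
          has_integral_mult_right[OF integrable_integral[OF intn], of ?B]
        by (intro has_integral_add) auto
      moreover have "integral {-pi..pi} n = 2*pi*m" by (simp add: m_def)
      ultimately show ?thesis by (simp add: algebra_simps)
    qed
    have "2*pi*?A \<le> integral {-pi..pi} (\<lambda>t. n t powr p)"
      using has_integral_le[OF tangent integrable_integral[OF intp]]
        powr_above_tangent[OF p \<open>m > 0\<close> pos] by simp
    moreover have "N powr p \<le> ?A" using N m_def p by (intro powr_mono2) auto
    ultimately have "2*pi*(N powr p) \<le> integral {-pi..pi} (\<lambda>t. n t powr p)"
      using pi_gt_zero by (smt (verit) mult_left_mono)
    then show ?thesis using pi_gt_zero by (simp add: field_simps)
  qed
qed

lemma slice_holomorphic_sub_mean_powr:
  fixes G :: "complex \<Rightarrow> quat"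
  assumes p: "p \<ge> 1" and I: "I \<in> imag_units" and contG: "continuous_on (cball 0 1) G"
    and holG: "slice_holomorphic I G (ball 0 1)"
  shows "norm (G 0) powr p \<le> (1/(2*pi)) * integral {-pi..pi} (\<lambda>t. norm (G (cis t)) powr p)"
proof (rule jensen_powr[OF p _ _ _ slice_holomorphic_mean_value[OF I contG holG]])
  show "continuous_on {-pi..pi} (\<lambda>t. norm (G (cis t)))"
    by (intro continuous_on_norm continuous_on_compose2[OF contG])
       (auto intro: continuous_intros)
qed auto

section \<open>The boundary map of a disc automorphism\<close>

text \<open>For |r| < 1 the automorphism \<zeta> \<mapsto> (\<zeta> + r)/(1 + r \<zeta>) of the unit disc maps e^{it} to
  e^{i \<sigma>_r(t)}, where \<sigma>_r is the following increasing bijection of [-\<pi>, \<pi>]; its derivative is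
  the Poisson kernel (1 - r^2)/|1 + r e^{it}|^2.\<close>
definition mobius_angle :: "real \<Rightarrow> real \<Rightarrow> real" where
  "mobius_angle r t = t - 2 * arctan (r * sin t / (1 + r * cos t))"

text \<open>The argument of the arctan has a positive denominator, so \<sigma>_r is smooth.\<close>
lemma one_plus_r_cos_pos:
  fixes r t :: real assumes "\<bar>r\<bar> < 1" shows "1 + r * cos t > 0"
proof -
  have "\<bar>r * cos t\<bar> \<le> \<bar>r\<bar>" using abs_cos_le_one[of t] by (simp add: abs_mult mult_left_le)
  then show ?thesis using assms by linarith
qed

text \<open>|1 + r e^{it}|^2 in real terms.\<close>
lemma poisson_denominator_eq:
  fixes r t :: real shows "1 + 2*r*cos t + r^2 = (1 + r * cos t)^2 + (r * sin t)^2"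
proof -
  have "(1 + r * cos t)^2 + (r * sin t)^2 = 1 + 2*r*cos t + r^2 * ((sin t)^2 + (cos t)^2)"
    by algebra
  then show ?thesis by simp
qed

lemma poisson_denominator_pos:
  fixes r t :: real assumes "\<bar>r\<bar> < 1" shows "1 + 2*r*cos t + r^2 > 0"
  unfolding poisson_denominator_eq using one_plus_r_cos_pos[OF assms, of t]
  by (smt (verit) zero_le_power2 zero_less_power2)

lemma mobius_angle_deriv:
  fixes r t :: real
  assumes r: "\<bar>r\<bar> < 1"
  shows "(mobius_angle r has_real_derivative (1 - r^2)/(1 + 2*r*cos t + r^2)) (at t)"
proof -
  define d where "d = 1 + r * cos t"
  define D where "D = 1 + 2*r*cos t + r^2"
  have d: "d > 0" unfolding d_def by (rule one_plus_r_cos_pos[OF r])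
  have D: "D > 0" unfolding D_def by (rule poisson_denominator_pos[OF r])
  have deriv: "(mobius_angle r has_real_derivative
      1 - 2 * (inverse (1 + (r * sin t / d)^2) *
        ((r * cos t * d - r * sin t * (- (r * sin t))) / d^2))) (at t)"
    unfolding mobius_angle_def d_def using d[unfolded d_def]
    by (auto intro!: derivative_eq_intros simp: power2_eq_square)
  have e1: "1 + (r * sin t / d)^2 = D / d^2"
    unfolding D_def poisson_denominator_eq d_def[symmetric] using d
    by (simp add: field_simps power_mult_distrib)
  have e2: "r * cos t * d - r * sin t * (- (r * sin t)) = r * cos t + r^2"
  proof -
    have "r * cos t * d - r * sin t * (- (r * sin t)) = r * cos t + r^2 * ((sin t)^2 + (cos t)^2)"
      unfolding d_def by algebra
    then show ?thesis by simp
  qed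
  have "1 - 2 * (inverse (D / d^2) * ((r * cos t + r^2) / d^2))
      = (D - 2 * (r * cos t + r^2)) / D"
    using d D by (simp add: field_simps)
  also have "\<dots> = (1 - r^2) / D" by (simp add: D_def)
  finally have eq: "1 - 2 * (inverse (D / d^2) * ((r * cos t + r^2) / d^2)) = (1 - r^2) / D" .
  from deriv have "(mobius_angle r has_real_derivative (1 - r^2) / D) (at t)"
    unfolding e1 e2 eq .
  then show ?thesis by (simp add: D_def)
qed

lemma mobius_angle_pi: "mobius_angle r pi = pi" "mobius_angle r (-pi) = -pi"
  by (simp_all add: mobius_angle_def)

lemma mobius_angle_cis:
  fixes r t :: real
  assumes r: "\<bar>r\<bar> < 1"
  shows "cis (mobius_angle r t) = (cis t + of_real r) / (1 + of_real r * cis t)"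
proof -
  define x where "x = 1 + r * cos t"
  define y where "y = r * sin t"
  define w where "w = Complex x y"
  have x: "x > 0" unfolding x_def by (rule one_plus_r_cos_pos[OF r])
  have w: "w = 1 + of_real r * cis t" by (simp add: w_def x_def y_def complex_eq_iff)
  have w0: "w \<noteq> 0" using x by (auto simp: w_def complex_eq_iff)
  have sq: "sqrt (1 + (y/x)^2) = cmod w / x"
  proof -
    have "1 + (y/x)^2 = (x^2+y^2)/x^2" using x by (simp add: field_simps)
    then show ?thesis using x by (simp add: real_sqrt_divide w_def cmod_def)
  qed
  text \<open>arctan (y/x) is the argument of w = x + i y, since x > 0.\<close>
  have arg: "cis (arctan (y/x)) = w / of_real (cmod w)"
    using x w0 by (simp add: complex_eq_iff cos_arctan sin_arctan sq) (simp add: w_def)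
  have "(cis (arctan (y/x)))^2 = cis (2 * arctan (y/x))"
    using Complex.DeMoivre[of "arctan (y/x)" 2] by (simp only: of_nat_numeral)
  then have "cis (mobius_angle r t) = cis t / (cis (arctan (y/x)))^2"
    by (simp add: mobius_angle_def x_def y_def cis_divide)
  also have "\<dots> = cis t * of_real ((cmod w)^2) / w^2"
    using w0 by (simp add: arg field_simps power2_eq_square)
  also have "of_real ((cmod w)^2) = w * cnj w" using complex_norm_square[of w] by simp
  also have "cis t * (w * cnj w) / w^2 = cis t * cnj w / w"
    using w0 by (simp add: field_simps power2_eq_square)
  also have "cis t * cnj w = cis t + of_real r"
  proof -
    have "cis t * cnj (cis t) = 1" by (simp add: cis_cnj cis_mult)
    then show ?thesis by (simp add: w algebra_simps)
  qed
  finally show ?thesis by (simp add: w)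
qed

text \<open>\<dots> and, being increasing, \<sigma>_r maps [-\<pi>, \<pi>] into itself.\<close>
lemma mobius_angle_mono:
  fixes r t :: real
  assumes r: "\<bar>r\<bar> < 1" and "-pi \<le> t" "t \<le> pi"
  shows "-pi \<le> mobius_angle r t" "mobius_angle r t \<le> pi"
proof -
  have D: "\<exists>y. DERIV (mobius_angle r) x :> y \<and> y \<ge> 0" for x
    using mobius_angle_deriv[OF r, of x] poisson_denominator_pos[OF r, of x] r
    by (intro exI[of _ "(1 - r^2)/(1 + 2*r*cos x + r^2)"])
       (auto simp: abs_square_less_1 less_eq_real_def)
  show "-pi \<le> mobius_angle r t"
    using DERIV_nonneg_imp_nondecreasing[OF assms(2) D] by (simp add: mobius_angle_pi)
  show "mobius_angle r t \<le> pi"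
    using DERIV_nonneg_imp_nondecreasing[OF assms(3) D] by (simp add: mobius_angle_pi)
qed

lemma continuous_mobius_angle:
  assumes "\<bar>r\<bar> < 1" shows "continuous_on UNIV (mobius_angle r)"
  using mobius_angle_deriv[OF assms] by (intro continuous_at_imp_continuous_on ballI DERIV_isCont) blast

text \<open>Invariance of the normalised boundary measure under the disc automorphism: the Poisson
  kernel is the Jacobian of \<sigma>_r.  Combined with periodicity, rotations are allowed too.\<close>
lemma poisson_substitution:
  fixes K :: "real \<Rightarrow> real"
  assumes r: "\<bar>r\<bar> < 1" and cK: "continuous_on UNIV K"
    and per: "\<And>x (k::int). K (x + 2*pi*k) = K x"
  shows "integral {-pi..pi} (\<lambda>t. (1 - r^2)/(1 + 2*r*cos t + r^2) * K (\<alpha> + mobius_angle r t))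
       = integral {-pi..pi} K"
proof -
  have cK': "continuous_on {-pi..pi} (\<lambda>s. K (\<alpha> + s))"
    by (rule continuous_on_compose2[OF cK]) (auto intro: continuous_intros)
  have cg: "continuous_on {-pi..pi} (mobius_angle r)"
    using continuous_mobius_angle[OF r] by (rule continuous_on_subset) simp
  have sub: "mobius_angle r ` {-pi..pi} \<subseteq> {-pi..pi}" using mobius_angle_mono[OF r] by auto
  define P where "P = (\<lambda>t. (1 - r^2)/(1 + 2*r*cos t + r^2))"
  have dd: "\<And>x. x \<in> {-pi..pi} - {} \<Longrightarrow>
              (mobius_angle r has_field_derivative P x) (at x within {-pi..pi})"
    unfolding P_def using mobius_angle_deriv[OF r] by (auto intro: has_field_derivative_at_within)
  have "((\<lambda>t. P t *\<^sub>R K (\<alpha> + mobius_angle r t)) has_integral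
          (integral {mobius_angle r (-pi)..mobius_angle r pi} (\<lambda>s. K (\<alpha> + s))
           - integral {mobius_angle r pi..mobius_angle r (-pi)} (\<lambda>s. K (\<alpha> + s)))) {-pi..pi}"
    by (rule has_integral_substitution_general[OF finite.emptyI _ sub cK' cg dd]) simp
  then have "integral {-pi..pi} (\<lambda>t. P t * K (\<alpha> + mobius_angle r t))
       = integral {-pi..pi} (\<lambda>s. K (\<alpha> + s))"
    by (simp add: mobius_angle_pi integral_unique)
  then have "integral {-pi..pi} (\<lambda>t. (1 - r^2)/(1 + 2*r*cos t + r^2) * K (\<alpha> + mobius_angle r t))
       = integral {-pi..pi} (\<lambda>s. K (\<alpha> + s))"
    unfolding P_def .
  also have "\<dots> = integral {-pi..pi} K"
    using periodic_integral_shift[OF cK per, of \<alpha>] by (simp add: add.commute)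
  finally show ?thesis .
qed

lemma mobius_disc_bound:
  fixes \<rho> :: real and z :: complex
  assumes "0 \<le> \<rho>" "\<rho> < 1" "cmod z \<le> 1"
  shows "cmod ((z + of_real \<rho>) / (1 + of_real \<rho> * z)) \<le> 1" "Re (1 + of_real \<rho> * z) > 0"
proof -
  have "\<bar>Re z\<bar> \<le> 1" using assms(3) abs_Re_le_cmod order_trans by blast
  then have "\<rho> * Re z > -1" using assms(1,2)
    by (smt (verit, best) abs_le_iff mult_left_le mult_minus_right)
  then show re: "Re (1 + of_real \<rho> * z) > 0" by simp
  then have nz: "1 + of_real \<rho> * z \<noteq> 0" by (metis order_less_irrefl zero_complex.sel(1))
  have "(cmod (z + of_real \<rho>))^2 \<le> (cmod (1 + of_real \<rho> * z))^2"
  proof -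
    have "(Re z)^2 + (Im z)^2 \<le> 1" using assms(3) by (simp add: power_le_one cmod_power2[symmetric])
    moreover have "0 \<le> 1 - \<rho>^2" using assms(1,2) by (simp add: abs_square_le_1)
    ultimately have "0 \<le> (1 - \<rho>^2) * (1 - ((Re z)^2 + (Im z)^2))" by simp
    then show ?thesis unfolding cmod_power2 by (simp add: power2_eq_square algebra_simps)
  qed
  then have "cmod (z + of_real \<rho>) \<le> cmod (1 + of_real \<rho> * z)"
    using power2_le_imp_le by force
  then show "cmod ((z + of_real \<rho>) / (1 + of_real \<rho> * z)) \<le> 1"
    using nz by (simp add: norm_divide divide_le_eq_1)
qed

section \<open>Integral means of slice regular functions\<close>

definition circle_pmean :: "(quat \<Rightarrow> quat) \<Rightarrow> real \<Rightarrow> quat \<Rightarrow> real \<Rightarrow> real" where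
  "circle_pmean f p I r =
     (1/(2*pi)) * integral {-pi..pi} (\<lambda>s. norm (f (qemb I (of_real r * cis s))) powr p)"

lemma integral_mean_circle_pmean: "integral_mean f p I r = circle_pmean f p I r powr (1/p)"
  by (simp add: integral_mean_def circle_pmean_def slice_exp_qemb)

text \<open>Nonnegativity holds without integrability, as a nonintegrable function has integral 0.\<close>
lemma circle_pmean_nonneg: "0 \<le> circle_pmean f p I r"
proof -
  let ?g = "\<lambda>s. norm (f (qemb I (of_real r * cis s))) powr p"
  have "0 \<le> integral {-pi..pi} ?g"
    by (cases "?g integrable_on {-pi..pi}") (auto simp: not_integrable_integral intro: integral_nonneg)
  then show ?thesis by (simp add: circle_pmean_def)
qed

lemma integral_mean_nonneg: "0 \<le> integral_mean f p I r"
  by (simp add: integral_mean_def)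

lemma continuous_circle_powr:
  assumes sr: "slice_regular f" and I: "I \<in> imag_units" and R: "0 \<le> R" "R < 1" and p: "p > 0"
  shows "continuous_on UNIV (\<lambda>s. norm (f (qemb I (of_real R * cis s))) powr p)"
proof -
  have "continuous_on UNIV (\<lambda>s. f (qemb I (of_real R * cis s)))"
    by (rule continuous_on_compose2[OF slice_regular_restriction(2)[OF sr I]])
       (use R in \<open>auto intro!: continuous_intros simp: norm_mult\<close>)
  then show ?thesis using p by (intro continuous_on_powr' continuous_intros) auto
qed

text \<open>For a weight h holomorphic in the disc, the sub-mean-value property
  of |G|^p for G(\<zeta>) = h(\<zeta>) f(R \<Psi>(\<zeta>)), with \<Psi>(\<zeta>) = e^{i\<alpha>} (\<zeta> + \<rho>)/(1 + \<rho> \<zeta>), compares the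
  value of f at R \<rho> e^{i\<alpha>} with its values on the circle of radius R.\<close>
lemma subordination_estimate:
  fixes f :: "quat \<Rightarrow> quat" and h :: "complex \<Rightarrow> complex"
  assumes p: "p \<ge> 1" and sr: "slice_regular f" and I: "I \<in> imag_units"
    and \<rho>: "0 \<le> \<rho>" "\<rho> < 1" and R: "0 < R" "R < 1"
    and holh: "h holomorphic_on ball 0 1" and conth: "continuous_on (cball 0 1) h"
  shows "cmod (h 0) powr p * norm (f (qemb I (of_real (R*\<rho>) * cis \<alpha>))) powr p \<le>
    (1/(2*pi)) * integral {-pi..pi} (\<lambda>t. cmod (h (cis t)) powr p *
         norm (f (qemb I (of_real R * cis (\<alpha> + mobius_angle \<rho> t)))) powr p)"
proof -
  define \<Psi> where "\<Psi> = (\<lambda>\<zeta>::complex. of_real R * cis \<alpha> * ((\<zeta> + of_real \<rho>) / (1 + of_real \<rho> * \<zeta>)))"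
  define G where "G = (\<lambda>\<zeta>. qemb I (h \<zeta>) \<otimes>\<^sub>q f (qemb I (\<Psi> \<zeta>)))"
  have den: "1 + of_real \<rho> * \<zeta> \<noteq> 0" and \<Psi>_ball: "\<Psi> \<zeta> \<in> ball 0 1"
    if "\<zeta> \<in> cball 0 1" for \<zeta>
  proof -
    have z: "cmod \<zeta> \<le> 1" using that by simp
    show "1 + of_real \<rho> * \<zeta> \<noteq> 0"
      using mobius_disc_bound(2)[OF \<rho> z] by (metis order_less_irrefl zero_complex.sel(1))
    have "cmod (\<Psi> \<zeta>) = R * cmod ((\<zeta> + of_real \<rho>) / (1 + of_real \<rho> * \<zeta>))"
      using R by (simp add: \<Psi>_def norm_mult norm_divide)
    also have "\<dots> \<le> R" using mobius_disc_bound(1)[OF \<rho> z] R by (simp add: mult_left_le)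
    finally show "\<Psi> \<zeta> \<in> ball 0 1" using R by simp
  qed
  have cont\<Psi>: "continuous_on (cball 0 1) \<Psi>"
    unfolding \<Psi>_def using den by (intro continuous_intros) auto
  have hol\<Psi>: "\<Psi> holomorphic_on ball 0 1"
    unfolding \<Psi>_def using den by (intro holomorphic_intros) auto
  have contF: "continuous_on (cball 0 1) (\<lambda>\<zeta>. f (qemb I (\<Psi> \<zeta>)))"
    by (rule continuous_on_compose2[OF slice_regular_restriction(2)[OF sr I] cont\<Psi>])
       (use \<Psi>_ball in auto)
  have holF: "slice_holomorphic I (\<lambda>\<zeta>. f (qemb I (\<Psi> \<zeta>))) (ball 0 1)"
    by (rule slice_holomorphic_compose[OF slice_regular_restriction(1)[OF sr I] hol\<Psi>])
       (use \<Psi>_ball in auto)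
  have contG: "continuous_on (cball 0 1) G"
    unfolding G_def by (intro continuous_intros conth contF)
  have holG: "slice_holomorphic I G (ball 0 1)"
    unfolding G_def by (rule slice_holomorphic_mult[OF I holh holF])
  have nG: "norm (G \<zeta>) powr p = cmod (h \<zeta>) powr p * norm (f (qemb I (\<Psi> \<zeta>))) powr p" for \<zeta>
    by (simp add: G_def norm_qmul norm_qemb[OF I] powr_mult)
  have \<Psi>0: "\<Psi> 0 = of_real (R*\<rho>) * cis \<alpha>" by (simp add: \<Psi>_def)
  have \<Psi>cis: "\<Psi> (cis t) = of_real R * cis (\<alpha> + mobius_angle \<rho> t)" for t
    using mobius_angle_cis[of \<rho> t] \<rho> by (simp add: \<Psi>_def cis_mult[symmetric] mult.assoc)
  show ?thesis
    using slice_holomorphic_sub_mean_powr[OF p I contG holG] unfolding nG \<Psi>0 \<Psi>cis .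
qed

text \<open>The weight ((1 - \<rho>^2)^(1/2) / (1 + \<rho> \<zeta>))^(2/p): |h|^p equals 1 - \<rho>^2 at the centre and
  the Poisson kernel on the boundary.\<close>
definition poisson_weight :: "real \<Rightarrow> real \<Rightarrow> complex \<Rightarrow> complex" where
  "poisson_weight p \<rho> \<zeta> =
     of_real ((1 - \<rho>^2) powr (1/p)) * exp (of_real (-2/p) * Ln (1 + of_real \<rho> * \<zeta>))"

lemma poisson_weight:
  assumes p: "p > 0" and \<rho>: "0 \<le> \<rho>" "\<rho> < 1"
  shows "poisson_weight p \<rho> holomorphic_on ball 0 1"
    and "continuous_on (cball 0 1) (poisson_weight p \<rho>)"
    and "cmod (poisson_weight p \<rho> 0) powr p = 1 - \<rho>^2"
    and "cmod (poisson_weight p \<rho> (cis t)) powr p = (1 - \<rho>^2)/(1 + 2*\<rho>*cos t + \<rho>^2)"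
proof -
  define c where "c = (1 - \<rho>^2) powr (1/p)"
  have r2: "0 < 1 - \<rho>^2" using \<rho> by (simp add: abs_square_less_1)
  have c0: "c > 0" unfolding c_def using r2 by simp
  have cp: "c powr p = 1 - \<rho>^2" unfolding c_def powr_powr using p r2 by simp
  have slit: "1 + of_real \<rho> * \<zeta> \<notin> \<real>\<^sub>\<le>\<^sub>0" if "\<zeta> \<in> cball 0 1" for \<zeta> :: complex
    using mobius_disc_bound(2)[OF \<rho>, of \<zeta>] that by (simp add: complex_nonpos_Reals_iff)
  show "poisson_weight p \<rho> holomorphic_on ball 0 1"
    unfolding poisson_weight_def[abs_def] using slit by (intro holomorphic_intros) auto
  show "continuous_on (cball 0 1) (poisson_weight p \<rho>)"
    unfolding poisson_weight_def[abs_def] using slit by (intro continuous_intros) auto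
  show "cmod (poisson_weight p \<rho> 0) powr p = 1 - \<rho>^2"
    using c0 cp by (simp add: poisson_weight_def c_def[symmetric])
  define w where "w = 1 + of_real \<rho> * cis t"
  have w0: "w \<noteq> 0" using slit[of "cis t"] by (auto simp: w_def)
  have mw: "(cmod w)^2 = 1 + 2*\<rho>*cos t + \<rho>^2"
    unfolding poisson_denominator_eq w_def cmod_power2 by (simp add: power2_eq_square)
  have "cmod (poisson_weight p \<rho> (cis t)) = c * exp (-2/p * ln (cmod w))"
    using c0 w0 by (simp add: poisson_weight_def c_def[symmetric] w_def[symmetric] norm_mult)
  also have "\<dots> = c * cmod w powr (-2/p)" using w0 by (simp add: powr_def)
  finally have "cmod (poisson_weight p \<rho> (cis t)) powr p = c powr p * cmod w powr (-2)"
    using c0 p by (simp add: powr_mult powr_powr)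
  also have "cmod w powr (-2) = 1 / (cmod w)^2"
    using w0 by (simp add: powr_minus_divide powr_numeral)
  finally show "cmod (poisson_weight p \<rho> (cis t)) powr p = (1 - \<rho>^2)/(1 + 2*\<rho>*cos t + \<rho>^2)"
    using cp mw by simp
qed

text \<open>Pointwise estimate by the integral mean on a larger circle (the case h = Poisson weight,
  followed by the change of variables s = \<alpha> + \<sigma>_\<rho>(t)).\<close>
lemma point_estimate:
  assumes p: "p \<ge> 1" and sr: "slice_regular f" and I: "I \<in> imag_units"
    and z: "cmod z < R" "R < 1"
  shows "(1 - (cmod z / R)^2) * norm (f (qemb I z)) powr p \<le> circle_pmean f p I R"
proof -
  have R0: "0 < R" using z norm_ge_zero[of z] by linarith
  have p0: "p > 0" using p by simp
  define \<rho> where "\<rho> = cmod z / R"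
  have \<rho>: "0 \<le> \<rho>" "\<rho> < 1" using z R0 by (auto simp: \<rho>_def field_simps)
  have polar: "of_real (R*\<rho>) * cis (Arg z) = z"
    using rcis_cmod_Arg[of z] R0 by (simp add: rcis_def \<rho>_def)
  define K where "K = (\<lambda>s. norm (f (qemb I (of_real R * cis s))) powr p)"
  have cK: "continuous_on UNIV K"
    unfolding K_def using continuous_circle_powr[OF sr I _ z(2) p0] R0 by simp
  have per: "K (x + 2*pi*k) = K x" for x and k :: int
    by (simp add: K_def cis_periodic)
  note w = poisson_weight[OF p0 \<rho>]
  have "(1 - \<rho>^2) * norm (f (qemb I z)) powr p \<le> (1/(2*pi)) *
      integral {-pi..pi} (\<lambda>t. (1 - \<rho>^2)/(1 + 2*\<rho>*cos t + \<rho>^2) * K (Arg z + mobius_angle \<rho> t))"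
    using subordination_estimate[OF p sr I \<rho> R0 z(2) w(1,2), of "Arg z"]
    unfolding w(3,4) polar K_def .
  also have "\<dots> = circle_pmean f p I R"
    using poisson_substitution[OF _ cK per] \<rho> by (simp add: circle_pmean_def K_def)
  finally show ?thesis by (simp add: \<rho>_def)
qed

text \<open>Hardy's convexity theorem, monotone part: the integral means increase with the radius
  (the case h = 1, averaged over the rotation angle \<alpha>).\<close>
lemma circle_pmean_mono:
  assumes p: "p \<ge> 1" and sr: "slice_regular f" and I: "I \<in> imag_units"
    and r: "0 < r1" "r1 \<le> r2" "r2 < 1"
  shows "circle_pmean f p I r1 \<le> circle_pmean f p I r2"
proof (cases "r1 = r2")
  case False
  define K1 where "K1 = (\<lambda>s. norm (f (qemb I (of_real r1 * cis s))) powr p)"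
  define K2 where "K2 = (\<lambda>s. norm (f (qemb I (of_real r2 * cis s))) powr p)"
  define \<rho> where "\<rho> = r1 / r2"
  have p0: "p > 0" using p by simp
  have r20: "0 < r2" using r by simp
  have \<rho>: "0 \<le> \<rho>" "\<rho> < 1" using r False r20 by (auto simp: \<rho>_def field_simps)
  have cK1: "continuous_on UNIV K1"
    unfolding K1_def using continuous_circle_powr[OF sr I _ _ p0] r by simp
  have cK2: "continuous_on UNIV K2"
    unfolding K2_def using continuous_circle_powr[OF sr I _ _ p0] r by simp
  have per: "K2 (x + 2*pi*k) = K2 x" for x and k :: int
    by (simp add: K2_def cis_periodic)
  have le: "K1 a \<le> (1/(2*pi)) * integral {-pi..pi} (\<lambda>t. K2 (a + mobius_angle \<rho> t))" for a
    using subordination_estimate[OF p sr I \<rho> r20 r(3), of "\<lambda>_. 1" a] r20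
    by (simp add: K1_def K2_def \<rho>_def)
  have "((\<lambda>a. integral {-pi..pi} (\<lambda>t. K2 (a + mobius_angle \<rho> t))) has_integral
          2*pi * integral {-pi..pi} K2) {-pi..pi}"
    by (rule periodic_integral_average[OF cK2 per continuous_mobius_angle]) (use \<rho> in simp)
  from has_integral_mult_right[OF this, of "1/(2*pi)"]
  have avg: "((\<lambda>a. (1/(2*pi)) * integral {-pi..pi} (\<lambda>t. K2 (a + mobius_angle \<rho> t)))
                    has_integral integral {-pi..pi} K2) {-pi..pi}"
    by simp
  have intK1: "K1 integrable_on {-pi..pi}"
    using cK1 by (rule integrable_continuous_interval[OF continuous_on_subset]) simp
  have "integral {-pi..pi} K1 \<le> integral {-pi..pi} K2"
    by (rule has_integral_le[OF integrable_integral[OF intK1] avg le])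
  then show ?thesis unfolding circle_pmean_def K1_def K2_def by (rule mult_left_mono) simp
qed simp

lemma integral_mean_mono:
  assumes p: "p \<ge> 1" and sr: "slice_regular f" and I: "I \<in> imag_units"
    and r: "0 < r1" "r1 \<le> r2" "r2 < 1"
  shows "integral_mean f p I r1 \<le> integral_mean f p I r2"
  unfolding integral_mean_circle_pmean using circle_pmean_mono[OF assms] p
  by (intro powr_mono2 circle_pmean_nonneg) auto

text \<open>By monotonicity, the limit in the definition of the H^p norm exists along every slice and
  equals the supremum of the integral means.\<close>
lemma Lim_integral_mean:
  assumes p: "p \<ge> 1" and sr: "slice_regular f" and I: "I \<in> imag_units"
  shows "Lim (at_left 1) (\<lambda>r. ereal (integral_mean f p I r))
           = (SUP r\<in>{0<..<1}. ereal (integral_mean f p I r))"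
proof (rule tendsto_Lim[OF trivial_limit_at_left_real])
  let ?m = "\<lambda>r. ereal (integral_mean f p I r)"
  let ?S = "SUP r\<in>{0<..<(1::real)}. ?m r"
  show "(?m \<longlongrightarrow> ?S) (at_left 1)"
  proof (rule order_tendstoI)
    fix a assume "a < ?S"
    then obtain r0 where r0: "r0 \<in> {0<..<1}" "a < ?m r0" by (auto simp: less_SUP_iff)
    have "eventually (\<lambda>r. r \<in> {r0<..<1}) (at_left (1::real))"
      using r0 by (intro eventually_at_left_real) auto
    then show "eventually (\<lambda>r. a < ?m r) (at_left 1)"
    proof (rule eventually_mono)
      fix r assume "r \<in> {r0<..<1}"
      then have "integral_mean f p I r0 \<le> integral_mean f p I r"
        using r0 by (intro integral_mean_mono[OF p sr I]) auto
      then show "a < ?m r" using r0 by (meson ereal_less_eq(3) less_le_trans)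
    qed
  next
    fix a assume "?S < a"
    have "eventually (\<lambda>r. r \<in> {0<..<1}) (at_left (1::real))"
      by (intro eventually_at_left_real) auto
    then show "eventually (\<lambda>r. ?m r < a) (at_left 1)"
    proof (rule eventually_mono)
      fix r :: real assume "r \<in> {0<..<1}"
      then have "?m r \<le> ?S" by (rule SUP_upper)
      then show "?m r < a" using \<open>?S < a\<close> by simp
    qed
  qed
qed

lemma Hp_norm_ge_integral_mean:
  assumes p: "p \<ge> 1" and sr: "slice_regular f" and I: "I \<in> imag_units" and r: "0 < r" "r < 1"
  shows "ereal (integral_mean f p I r) \<le> Hp_norm p f"
proof -
  have "ereal (integral_mean f p I r) \<le> (SUP r\<in>{0<..<1}. ereal (integral_mean f p I r))"
    by (rule SUP_upper) (use r in auto)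
  also have "\<dots> = Lim (at_left 1) (\<lambda>r. ereal (integral_mean f p I r))"
    by (rule Lim_integral_mean[OF p sr I, symmetric])
  also have "\<dots> \<le> Hp_norm p f"
    unfolding Hp_norm_def using I by (rule SUP_upper)
  finally show ?thesis .
qed

text \<open>If all integral means along the slice of z are bounded by l, then letting R \<rightarrow> 1 in
  the point estimate gives |f(z)| \<le> (1 - |z|^2)^(-1/p) l.\<close>
lemma pointwise_bound:
  assumes p: "p \<ge> 1" and sr: "slice_regular f" and I: "I \<in> imag_units" and z: "cmod z < 1"
    and means: "\<And>r. 0 < r \<Longrightarrow> r < 1 \<Longrightarrow> integral_mean f p I r \<le> l"
  shows "norm (f (qemb I z)) \<le> (1 / (1 - (cmod z)^2)) powr (1/p) * l"
proof -
  have p0: "p > 0" using p by simp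
  have l0: "0 \<le> l" using means[of "1/2"] integral_mean_nonneg[of f p I "1/2"] by simp
  define A where "A = norm (f (qemb I z)) powr p"
  have near: "(1 - (cmod z / R)^2) * A \<le> l powr p" if R: "cmod z < R" "R < 1" for R
  proof -
    have R0: "0 < R" using R norm_ge_zero[of z] by linarith
    have "circle_pmean f p I R = integral_mean f p I R powr p"
      unfolding integral_mean_circle_pmean powr_powr using p0 circle_pmean_nonneg by simp
    also have "\<dots> \<le> l powr p"
      using means[OF R0 R(2)] integral_mean_nonneg p0 by (intro powr_mono2) auto
    finally show ?thesis using point_estimate[OF p sr I R] unfolding A_def by linarith
  qed
  have lim: "((\<lambda>R. (1 - (cmod z / R)^2) * A) \<longlongrightarrow> (1 - (cmod z / 1)^2) * A) (at_left 1)"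
    by (intro tendsto_intros) auto
  have "eventually (\<lambda>R. (1 - (cmod z / R)^2) * A \<le> l powr p) (at_left 1)"
    using eventually_at_left_real[OF z] by (rule eventually_mono) (use near in auto)
  then have limit: "(1 - (cmod z)^2) * A \<le> l powr p"
    using tendsto_upperbound[OF lim] by simp
  have dz: "0 < 1 - (cmod z)^2" using z by (simp add: abs_square_less_1)
  define c where "c = 1 / (1 - (cmod z)^2)"
  have A: "A \<le> l powr p * c" using limit dz unfolding c_def by (simp add: field_simps)
  have c0: "0 < c" using dz by (simp add: c_def)
  have "norm (f (qemb I z)) = A powr (1/p)" unfolding A_def powr_powr using p0 by simp
  also have "\<dots> \<le> (l powr p * c) powr (1/p)"
    using A p0 by (intro powr_mono2) (auto simp: A_def)
  also have "\<dots> = (l powr p) powr (1/p) * c powr (1/p)"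
    using c0 by (simp add: powr_mult)
  also have "\<dots> = c powr (1/p) * l"
    using l0 p0 by (simp add: powr_powr)
  finally show ?thesis unfolding c_def .
qed

theorem lemma8p2:
  fixes p :: real and f :: "quat \<Rightarrow> quat" and q :: quat
  assumes "1 \<le> p" and "f \<in> Hp p" and "q \<in> qball"
  shows "ereal (norm (f q)) \<le>
           ereal (sqrt 2 * (1 / (1 - (norm q)\<^sup>2)) powr (1 / p)) * Hp_norm p f"
proof -
  have sr: "slice_regular f" and fin: "Hp_norm p f < \<infinity>" using assms(2) by (auto simp: Hp_def)
  obtain I z where I: "I \<in> imag_units" and q: "q = qemb I z" by (rule quat_slice)
  have z: "cmod z = norm q" using norm_qemb[OF I] q by simp
  note means = Hp_norm_ge_integral_mean[OF assms(1) sr I]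
  have "ereal (integral_mean f p I (1/2)) \<le> Hp_norm p f" by (rule means) simp_all
  then have "0 \<le> Hp_norm p f"
    using integral_mean_nonneg[of f p I "1/2"] by (meson ereal_less_eq(5) order_trans)
  then obtain l where l: "Hp_norm p f = ereal l" "0 \<le> l" using fin by (cases "Hp_norm p f") auto
  have "norm (f q) \<le> (1 / (1 - (norm q)^2)) powr (1/p) * l"
    using pointwise_bound[OF assms(1) sr I, of z l] means assms(3) l(1)
    by (simp add: q z qball_def)
  also have "\<dots> \<le> sqrt 2 * ((1 / (1 - (norm q)^2)) powr (1/p) * l)"
    using mult_right_mono[of 1 "sqrt 2" "(1 / (1 - (norm q)^2)) powr (1/p) * l"] l(2) by simp
  finally show ?thesis using l(1) by simp
qed

end
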